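(* Consider the scalar system $\dot x=u+a(t)x^2$, where $x,u\in\mathbb{R}$. Let $\lambda>0$, $k>0$, $\gamma_a>0$, $\mu(t)=e^{\lambda t}$ and $s=\mu x$. Apply the controller $$u=-(k+\lambda)x-\hat a x^2-\frac{\delta_{\Delta_a}}2x^3-\frac{\delta_{\Delta_a}}2x,\qquad \dot{\hat a}=\gamma_a\,\mu\, s\, x^2.$$ Then, for all initial conditions: 1. $V=\tfrac12 s^2+\tfrac1{2\gamma_a}(\ell_a-\hat a)^2$ satisfies $\dot V\le-ks^2$. 2. All signals $s,\hat a,x,u$ are bounded, and $|x(t)|\le Ce^{-\lambda t}$ for some constant $C$ depending on the initial conditions. 3. $\lim_{t\to\infty}\hat a(t)$ exists.
   Context: $a(t)$ is an unknown, piecewise continuous, time-varying scalar parameter. There is an unknown constant $\ell_a$ and a known constant $\delta_{\Delta_a}>0$ such that $|a(t)-\ell_a|\le\delta_{\Delta_a}$ for all $t\ge0$. *)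

theory Defs
  imports "HOL-Analysis.Analysis"
begin

definition piecewise_continuous :: "(real \<Rightarrow> real) \<Rightarrow> bool" where
  "piecewise_continuous a \<longleftrightarrow>
     (\<forall>T. finite {t \<in> {0..T}. \<not> continuous (at t within {0..}) a}) \<and>
     (\<forall>t\<ge>0. \<not> continuous (at t within {0..}) a \<longrightarrow>
        (\<exists>L. (a \<longlongrightarrow> L) (at_right t)) \<and> (t > 0 \<longrightarrow> (\<exists>L. (a \<longlongrightarrow> L) (at_left t))))"

definition ctrl :: "real \<Rightarrow> real \<Rightarrow> real \<Rightarrow> real \<Rightarrow> real \<Rightarrow> real" where
  "ctrl k lam \<delta> ah x = - (k + lam) * x - ah * x\<^sup>2 - (\<delta> / 2) * x ^ 3 - (\<delta> / 2) * x"

end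

theory Submission
  imports Defs "HOL-Real_Asymp.Real_Asymp"
begin

text \<open>With \<open>s = e\<^sup>\<lambda>\<^sup>t x\<close>, the controller cancels every term of \<open>V'\<close> except \<open>-k s\<^sup>2\<close> and
  \<open>e\<^sup>2\<^sup>\<lambda>\<^sup>t x\<^sup>3 (a - \<ell>\<^sub>a)\<close>, and the latter is dominated by the damping \<open>\<delta>/2 (x\<^sup>4 + x\<^sup>2)\<close> because
  \<open>2 |x|\<^sup>3 \<le> x\<^sup>4 + x\<^sup>2\<close>.  So \<open>V\<close> is nonincreasing: it may fail to be differentiable where \<open>a\<close> jumps,
  but there are only finitely many such points in every bounded interval, which the fundamental
  theorem of calculus tolerates.  Hence \<open>s\<close> and the estimate are bounded and \<open>x = e\<^sup>-\<^sup>\<lambda>\<^sup>t s\<close> decays.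
  Finally the derivative \<open>\<gamma>\<^sub>a s\<^sup>3 e\<^sup>-\<^sup>\<lambda>\<^sup>t\<close> of the estimate is dominated by an integrable exponential,
  so the estimate converges.\<close>

lemma antitone_if_deriv_nonpos_off_locally_finite:
  fixes f :: "real \<Rightarrow> real"
  assumes cont: "continuous_on {0..} f"
    and fin: "\<And>T. finite (E \<inter> {0..T})"
    and deriv: "\<And>t. 0 \<le> t \<Longrightarrow> t \<notin> E \<Longrightarrow>
                  \<exists>D. (f has_real_derivative D) (at t within {0..}) \<and> D \<le> 0"
    and st: "0 \<le> s" "s \<le> t"
  shows "f t \<le> f s"
proof -
  have "\<forall>u. \<exists>D. D \<le> 0 \<and> (0 \<le> u \<and> u \<notin> E \<longrightarrow> (f has_real_derivative D) (at u within {0..}))"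
    using deriv by (metis order_refl)
  then obtain f' where f'_nonpos: "\<And>u. f' u \<le> 0"
    and f'_deriv: "\<And>u. 0 \<le> u \<Longrightarrow> u \<notin> E \<Longrightarrow> (f has_real_derivative f' u) (at u within {0..})"
    by metis
  have "(f' has_integral (f t - f s)) {s..t}"
  proof (rule fundamental_theorem_of_calculus_interior_strong[OF fin[of t] \<open>s \<le> t\<close>])
    fix u assume "u \<in> {s<..<t} - E \<inter> {0..t}"
    then have "0 < u" "u \<notin> E"
      using st by auto
    then have "at u within {0..} = at u"
      by (intro at_within_interior) auto
    then show "(f has_vector_derivative f' u) (at u)"
      using f'_deriv[OF _ \<open>u \<notin> E\<close>] \<open>0 < u\<close>
      by (simp add: has_real_derivative_iff_has_vector_derivative)
  next
    show "continuous_on {s..t} f"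
      using cont by (rule continuous_on_subset) (use st in auto)
  qed
  then show ?thesis
    using has_integral_le[OF _ has_integral_0, of f' "f t - f s" "{s..t}"] f'_nonpos by force
qed

lemma tendsto_Inf_if_antitone_bdd_below:
  fixes g :: "real \<Rightarrow> real"
  assumes antitone: "\<And>s t. 0 \<le> s \<Longrightarrow> s \<le> t \<Longrightarrow> g t \<le> g s"
    and below: "\<And>t. 0 \<le> t \<Longrightarrow> b \<le> g t"
  shows "(g \<longlongrightarrow> Inf (g ` {0..})) at_top"
proof (rule decreasing_tendsto)
  have bdd: "bdd_below (g ` {0..})"
    using below by (intro bdd_belowI2) auto
  then show "\<forall>\<^sub>F t in at_top. Inf (g ` {0..}) \<le> g t"
    by (intro eventually_at_top_linorderI[of 0] cInf_lower) auto
  fix y assume "Inf (g ` {0..}) < y"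
  then obtain t0 where "0 \<le> t0" "g t0 < y"
    using cInf_less_iff[OF _ bdd] by auto
  then have "g t < y" if "t0 \<le> t" for t
    using antitone[of t0 t] that by linarith
  then show "\<forall>\<^sub>F t in at_top. g t < y"
    by (rule eventually_at_top_linorderI)
qed

lemma convergent_if_deriv_le_exp_decay:
  fixes f :: "real \<Rightarrow> real"
  assumes cont: "continuous_on {0..} f"
    and deriv: "\<And>t. 0 \<le> t \<Longrightarrow>
                  \<exists>D. (f has_real_derivative D) (at t within {0..}) \<and> D \<le> c * exp (- lam * t)"
    and below: "\<And>t. 0 \<le> t \<Longrightarrow> b \<le> f t"
    and c_nonneg: "0 \<le> c" and lam_pos: "0 < lam"
  shows "\<exists>L. (f \<longlongrightarrow> L) at_top"
proof -
  define g where "g t = f t + c / lam * exp (- lam * t)" for t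
  have g_cont: "continuous_on {0..} g"
    unfolding g_def by (intro continuous_intros cont)
  have g_deriv: "\<exists>D. (g has_real_derivative D) (at t within {0..}) \<and> D \<le> 0" if "0 \<le> t" for t
  proof -
    obtain D where D: "(f has_real_derivative D) (at t within {0..})" "D \<le> c * exp (- lam * t)"
      using deriv \<open>0 \<le> t\<close> by blast
    have "(g has_real_derivative D - c * exp (- lam * t)) (at t within {0..})"
      unfolding g_def by (rule derivative_eq_intros D(1) refl)+ (use lam_pos in simp)
    with D(2) show ?thesis
      by force
  qed
  have "g t \<le> g s" if "0 \<le> s" "s \<le> t" for s t
    by (rule antitone_if_deriv_nonpos_off_locally_finite[where E = "{}"])
      (use g_cont g_deriv that in auto)
  moreover have "b \<le> g t" if "0 \<le> t" for t
    using below[OF that] c_nonneg lam_pos unfolding g_def by (simp add: add_increasing2)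
  ultimately have "(g \<longlongrightarrow> Inf (g ` {0..})) at_top"
    by (rule tendsto_Inf_if_antitone_bdd_below)
  moreover have "((\<lambda>t. c / lam * exp (- lam * t)) \<longlongrightarrow> 0) at_top"
    using lam_pos by real_asymp
  ultimately have "((\<lambda>t. g t - c / lam * exp (- lam * t)) \<longlongrightarrow> Inf (g ` {0..}) - 0) at_top"
    by (rule tendsto_diff)
  then show ?thesis
    unfolding g_def by auto
qed

lemma cube_perturbation_le_damping:
  fixes X d \<delta> :: real
  assumes "\<bar>d\<bar> \<le> \<delta>"
  shows "X ^ 3 * d \<le> \<delta> / 2 * (X ^ 4 + X\<^sup>2)"
proof -
  have "2 * \<bar>X\<bar> ^ 3 \<le> \<bar>X\<bar> ^ 4 + \<bar>X\<bar>\<^sup>2"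
  proof -
    have "\<bar>X\<bar> ^ 4 + \<bar>X\<bar>\<^sup>2 - 2 * \<bar>X\<bar> ^ 3 = (\<bar>X\<bar> * (\<bar>X\<bar> - 1))\<^sup>2"
      by algebra
    then show ?thesis
      by (metis diff_ge_0_iff_ge zero_le_power2)
  qed
  then have "2 * \<bar>X\<bar> ^ 3 \<le> X ^ 4 + X\<^sup>2"
    by (simp only: power_even_abs_numeral even_numeral)
  then have "\<delta> * (2 * \<bar>X\<bar> ^ 3) \<le> \<delta> * (X ^ 4 + X\<^sup>2)"
    using assms abs_ge_zero[of d] by (intro mult_left_mono) linarith+
  moreover have "X ^ 3 * d \<le> \<bar>X\<bar> ^ 3 * \<delta>"
  proof -
    have "X ^ 3 * d \<le> \<bar>X\<bar> ^ 3 * \<bar>d\<bar>"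
      by (metis abs_ge_self abs_mult power_abs)
    also have "\<dots> \<le> \<bar>X\<bar> ^ 3 * \<delta>"
      using assms by (intro mult_left_mono) auto
    finally show ?thesis .
  qed
  ultimately show ?thesis
    by (simp add: mult.commute)
qed

lemma abs_ctrl_le:
  assumes x: "\<bar>x\<bar> \<le> X" and h: "\<bar>h\<bar> \<le> H" and gain: "0 \<le> k + lam" and \<delta>: "0 \<le> \<delta>"
  shows "\<bar>ctrl k lam \<delta> h x\<bar> \<le> (k + lam) * X + H * X\<^sup>2 + \<delta> / 2 * X ^ 3 + \<delta> / 2 * X"
proof -
  have "\<bar>ctrl k lam \<delta> h x\<bar> \<le> \<bar>(k + lam) * x\<bar> + \<bar>h * x\<^sup>2\<bar> + \<bar>\<delta> / 2 * x ^ 3\<bar> + \<bar>\<delta> / 2 * x\<bar>"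
    unfolding ctrl_def by linarith
  also have "\<dots> = (k + lam) * \<bar>x\<bar> + \<bar>h\<bar> * \<bar>x\<bar>\<^sup>2 + \<delta> / 2 * \<bar>x\<bar> ^ 3 + \<delta> / 2 * \<bar>x\<bar>"
    using gain \<delta> by (simp add: abs_mult power_abs)
  also have "\<dots> \<le> (k + lam) * X + H * X\<^sup>2 + \<delta> / 2 * X ^ 3 + \<delta> / 2 * X"
  proof -
    have "\<bar>x\<bar>\<^sup>2 \<le> X\<^sup>2" "\<bar>x\<bar> ^ 3 \<le> X ^ 3"
      using power_mono[OF x abs_ge_zero] by blast+
    then have "\<bar>h\<bar> * \<bar>x\<bar>\<^sup>2 \<le> H * X\<^sup>2"
      using h by (intro mult_mono) auto
    moreover have "(k + lam) * \<bar>x\<bar> \<le> (k + lam) * X" "\<delta> / 2 * \<bar>x\<bar> ^ 3 \<le> \<delta> / 2 * X ^ 3"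
      "\<delta> / 2 * \<bar>x\<bar> \<le> \<delta> / 2 * X"
      using assms \<open>\<bar>x\<bar> ^ 3 \<le> X ^ 3\<close> by (auto intro: mult_left_mono)
    ultimately show ?thesis
      by linarith
  qed
  finally show ?thesis .
qed

text \<open>The left-hand side is \<open>V'\<close> by the chain rule, with \<open>M = e\<^sup>\<lambda>\<^sup>t\<close>, \<open>X = x\<close>, \<open>A = a\<close>,
  \<open>H = \<hat>a\<close>; the gain \<open>\<gamma>\<^sub>a\<close> of the update law has cancelled against the weight \<open>1/(2\<gamma>\<^sub>a)\<close> in \<open>V\<close>.\<close>

lemma lyapunov_rate_identity:
  fixes M X A H :: real
  shows "M * X * (lam * (M * X) + M * (ctrl k lam \<delta> H X + A * X\<^sup>2)) - (la - H) * (M * (M * X) * X\<^sup>2)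
    = - k * (M * X)\<^sup>2 + M\<^sup>2 * (X ^ 3 * (A - la) - \<delta> / 2 * (X ^ 4 + X\<^sup>2))"
  unfolding ctrl_def by (simp add: algebra_simps power2_eq_square power3_eq_cube power4_eq_xxxx)

locale adaptive_quadratic_loop =
  fixes a :: "real \<Rightarrow> real" and la \<delta> lam k \<gamma>a :: real
    and x ah :: "real \<Rightarrow> real"
  assumes a_pc: "piecewise_continuous a"
    and a_bound: "\<forall>t\<ge>0. \<bar>a t - la\<bar> \<le> \<delta>"
    and \<delta>_pos: "\<delta> > 0" and lam_pos: "lam > 0" and k_pos: "k > 0" and \<gamma>_pos: "\<gamma>a > 0"
    and x_cont: "continuous_on {0..} x"
    and ah_cont: "continuous_on {0..} ah"
    and x_ode: "\<forall>t\<ge>0. continuous (at t within {0..}) a \<longrightarrow>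
        (x has_real_derivative (ctrl k lam \<delta> (ah t) (x t) + a t * (x t)\<^sup>2)) (at t within {0..})"
    and ah_ode: "\<forall>t\<ge>0.
        (ah has_real_derivative (\<gamma>a * exp (lam * t) * (exp (lam * t) * x t) * (x t)\<^sup>2)) (at t within {0..})"
begin

definition s :: "real \<Rightarrow> real" where
  "s t = exp (lam * t) * x t"

definition V :: "real \<Rightarrow> real" where
  "V t = 1/2 * (s t)\<^sup>2 + 1 / (2 * \<gamma>a) * (la - ah t)\<^sup>2"

lemma V_nonneg: "0 \<le> V t"
  using \<gamma>_pos by (simp add: V_def)

lemma V_has_derivative:
  assumes "0 \<le> t" "continuous (at t within {0..}) a"
  shows "(V has_real_derivative
           - k * (s t)\<^sup>2 + (exp (lam * t))\<^sup>2 * ((x t) ^ 3 * (a t - la) - \<delta> / 2 * ((x t) ^ 4 + (x t)\<^sup>2)))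
         (at t within {0..})"
proof -
  have "(V has_real_derivative
           s t * (lam * s t + exp (lam * t) * (ctrl k lam \<delta> (ah t) (x t) + a t * (x t)\<^sup>2))
           - (la - ah t) * (exp (lam * t) * s t * (x t)\<^sup>2))
         (at t within {0..})"
    unfolding V_def[abs_def] s_def
    by (rule derivative_eq_intros x_ode[rule_format, OF assms] ah_ode[rule_format, OF assms(1)] refl)+
      (use \<gamma>_pos in \<open>simp add: power2_eq_square\<close>)
  then show ?thesis
    unfolding s_def lyapunov_rate_identity .
qed

lemma V_derivative_le:
  assumes "0 \<le> t" "continuous (at t within {0..}) a"
  shows "\<exists>V'. (V has_real_derivative V') (at t within {0..}) \<and> V' \<le> - k * (s t)\<^sup>2"
proof -
  have "(x t) ^ 3 * (a t - la) - \<delta> / 2 * ((x t) ^ 4 + (x t)\<^sup>2) \<le> 0"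
    using cube_perturbation_le_damping a_bound assms(1) by simp
  then have "(exp (lam * t))\<^sup>2 * ((x t) ^ 3 * (a t - la) - \<delta> / 2 * ((x t) ^ 4 + (x t)\<^sup>2)) \<le> 0"
    by (simp add: mult_nonneg_nonpos)
  with V_has_derivative[OF assms] show ?thesis
    by force
qed

lemma V_le_initial:
  assumes "0 \<le> t"
  shows "V t \<le> V 0"
proof (rule antitone_if_deriv_nonpos_off_locally_finite[of V "{t. \<not> continuous (at t within {0..}) a}" 0 t])
  show "continuous_on {0..} V"
    unfolding V_def[abs_def] s_def by (intro continuous_intros x_cont ah_cont)
  show "finite ({t. \<not> continuous (at t within {0..}) a} \<inter> {0..T})" for T
    using a_pc unfolding piecewise_continuous_def by (simp add: Int_def conj_commute)
  fix u :: real assume "0 \<le> u" "u \<notin> {t. \<not> continuous (at t within {0..}) a}"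
  then obtain V' where "(V has_real_derivative V') (at u within {0..})" "V' \<le> - k * (s u)\<^sup>2"
    using V_derivative_le by auto
  moreover have "- k * (s u)\<^sup>2 \<le> 0"
    using k_pos by simp
  ultimately show "\<exists>D. (V has_real_derivative D) (at u within {0..}) \<and> D \<le> 0"
    by force
qed (use assms in auto)

lemma abs_s_le:
  assumes "0 \<le> t"
  shows "\<bar>s t\<bar> \<le> sqrt (2 * V 0)"
proof (rule real_le_rsqrt)
  have "1/2 * (s t)\<^sup>2 \<le> V t"
    using \<gamma>_pos by (simp add: V_def)
  with V_le_initial[OF assms] show "\<bar>s t\<bar>\<^sup>2 \<le> 2 * V 0"
    by simp
qed

lemma abs_ah_le:
  assumes "0 \<le> t"
  shows "\<bar>ah t\<bar> \<le> \<bar>la\<bar> + sqrt (2 * \<gamma>a * V 0)"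
proof -
  have "1 / (2 * \<gamma>a) * (la - ah t)\<^sup>2 \<le> V t"
    by (simp add: V_def)
  also have "\<dots> \<le> V 0"
    using V_le_initial[OF assms] .
  finally have "1 / (2 * \<gamma>a) * (la - ah t)\<^sup>2 \<le> V 0" .
  then have "\<bar>la - ah t\<bar>\<^sup>2 \<le> 2 * \<gamma>a * V 0"
    using \<gamma>_pos by (simp add: field_simps)
  then have "\<bar>la - ah t\<bar> \<le> sqrt (2 * \<gamma>a * V 0)"
    by (rule real_le_rsqrt)
  then show ?thesis
    by linarith
qed

lemma abs_x_le_exp_decay:
  assumes "0 \<le> t"
  shows "\<bar>x t\<bar> \<le> sqrt (2 * V 0) * exp (- lam * t)"
proof -
  have "\<bar>x t\<bar> = \<bar>s t\<bar> * exp (- lam * t)"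
    by (simp add: s_def abs_mult exp_minus field_simps)
  then show ?thesis
    using abs_s_le[OF assms] by (simp add: mult_right_mono)
qed

lemma abs_x_le:
  assumes "0 \<le> t"
  shows "\<bar>x t\<bar> \<le> sqrt (2 * V 0)"
proof -
  have "sqrt (2 * V 0) * exp (- lam * t) \<le> sqrt (2 * V 0)"
    using lam_pos assms V_nonneg by (intro mult_left_le) auto
  then show ?thesis
    using abs_x_le_exp_decay[OF assms] by linarith
qed

lemma signals_bounded:
  "\<exists>B. \<forall>t\<ge>0. \<bar>s t\<bar> \<le> B \<and> \<bar>ah t\<bar> \<le> B \<and> \<bar>x t\<bar> \<le> B \<and> \<bar>ctrl k lam \<delta> (ah t) (x t)\<bar> \<le> B"
proof -
  define S where "S = sqrt (2 * V 0)"
  define H where "H = \<bar>la\<bar> + sqrt (2 * \<gamma>a * V 0)"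
  define U where "U = (k + lam) * S + H * S\<^sup>2 + \<delta> / 2 * S ^ 3 + \<delta> / 2 * S"
  have bounds: "\<bar>s t\<bar> \<le> S" "\<bar>ah t\<bar> \<le> H" "\<bar>x t\<bar> \<le> S" "\<bar>ctrl k lam \<delta> (ah t) (x t)\<bar> \<le> U"
    if "0 \<le> t" for t
    using abs_s_le abs_ah_le abs_x_le abs_ctrl_le[OF abs_x_le abs_ah_le] k_pos lam_pos \<delta>_pos that
    unfolding S_def H_def U_def by auto
  have nonneg: "0 \<le> S" "0 \<le> H" "0 \<le> U"
    using bounds(4)[of 0] V_nonneg[of 0] \<gamma>_pos by (auto simp: S_def H_def)
  have "\<bar>s t\<bar> \<le> S + H + U \<and> \<bar>ah t\<bar> \<le> S + H + U \<and> \<bar>x t\<bar> \<le> S + H + U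
      \<and> \<bar>ctrl k lam \<delta> (ah t) (x t)\<bar> \<le> S + H + U" if "0 \<le> t" for t
    using bounds[OF that] nonneg by auto
  then show ?thesis
    by blast
qed

lemma ah_convergent: "\<exists>L. (ah \<longlongrightarrow> L) at_top"
proof (rule convergent_if_deriv_le_exp_decay[OF ah_cont])
  fix t :: real assume "0 \<le> t"
  have "\<gamma>a * exp (lam * t) * (exp (lam * t) * x t) * (x t)\<^sup>2 = \<gamma>a * (s t) ^ 3 * exp (- lam * t)"
    by (simp add: s_def exp_minus field_simps power2_eq_square power3_eq_cube)
  also have "\<dots> \<le> \<gamma>a * sqrt (2 * V 0) ^ 3 * exp (- lam * t)"
  proof -
    have "s t ^ 3 \<le> \<bar>s t\<bar> ^ 3"
      by (metis abs_ge_self power_abs)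
    also have "\<dots> \<le> sqrt (2 * V 0) ^ 3"
      using power_mono[OF abs_s_le[OF \<open>0 \<le> t\<close>] abs_ge_zero] .
    finally show ?thesis
      using \<gamma>_pos by (intro mult_right_mono mult_left_mono) auto
  qed
  finally show "\<exists>D. (ah has_real_derivative D) (at t within {0..}) \<and> D \<le> \<gamma>a * sqrt (2 * V 0) ^ 3 * exp (- lam * t)"
    using ah_ode \<open>0 \<le> t\<close> by blast
next
  show "- (\<bar>la\<bar> + sqrt (2 * \<gamma>a * V 0)) \<le> ah t" if "0 \<le> t" for t
    using abs_ah_le[OF that] by linarith
qed (use \<gamma>_pos lam_pos V_nonneg in auto)

end

theorem mainTheorem4:
  fixes a :: "real \<Rightarrow> real" and la \<delta> lam k \<gamma>a :: real
    and x ah :: "real \<Rightarrow> real"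
  assumes a_pc: "piecewise_continuous a"
    and a_bound: "\<forall>t\<ge>0. \<bar>a t - la\<bar> \<le> \<delta>"
    and \<delta>_pos: "\<delta> > 0" and lam_pos: "lam > 0" and k_pos: "k > 0" and \<gamma>_pos: "\<gamma>a > 0"
    and x_cont: "continuous_on {0..} x"
    and ah_cont: "continuous_on {0..} ah"
    and x_ode: "\<forall>t\<ge>0. continuous (at t within {0..}) a \<longrightarrow>
        (x has_real_derivative (ctrl k lam \<delta> (ah t) (x t) + a t * (x t)\<^sup>2)) (at t within {0..})"
    and ah_ode: "\<forall>t\<ge>0.
        (ah has_real_derivative (\<gamma>a * exp (lam * t) * (exp (lam * t) * x t) * (x t)\<^sup>2)) (at t within {0..})"
  shows
    "(\<forall>t\<ge>0. continuous (at t within {0..}) a \<longrightarrow>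
        (\<exists>V'. ((\<lambda>\<tau>. (1/2) * (exp (lam * \<tau>) * x \<tau>)\<^sup>2 + (1 / (2 * \<gamma>a)) * (la - ah \<tau>)\<^sup>2)
                 has_real_derivative V') (at t within {0..})
              \<and> V' \<le> - k * (exp (lam * t) * x t)\<^sup>2))
     \<and> (\<exists>B. \<forall>t\<ge>0. \<bar>exp (lam * t) * x t\<bar> \<le> B \<and> \<bar>ah t\<bar> \<le> B \<and> \<bar>x t\<bar> \<le> B
                   \<and> \<bar>ctrl k lam \<delta> (ah t) (x t)\<bar> \<le> B)
     \<and> (\<exists>C. \<forall>t\<ge>0. \<bar>x t\<bar> \<le> C * exp (- lam * t))
     \<and> (\<exists>L. (ah \<longlongrightarrow> L) at_top)"
proof -
  interpret adaptive_quadratic_loop a la \<delta> lam k \<gamma>a x ah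
    using assms by unfold_locales
  have V_eq: "(\<lambda>\<tau>. (1/2) * (exp (lam * \<tau>) * x \<tau>)\<^sup>2 + (1 / (2 * \<gamma>a)) * (la - ah \<tau>)\<^sup>2) = V"
    by (simp add: fun_eq_iff V_def s_def)
  show ?thesis
    unfolding V_eq unfolding s_def[symmetric]
  proof (intro conjI allI impI)
    fix t :: real assume "0 \<le> t" "continuous (at t within {0..}) a"
    then show "\<exists>V'. (V has_real_derivative V') (at t within {0..}) \<and> V' \<le> - k * (s t)\<^sup>2"
      by (rule V_derivative_le)
  next
    show "\<exists>C. \<forall>t\<ge>0. \<bar>x t\<bar> \<le> C * exp (- lam * t)"
      using abs_x_le_exp_decay by blast
  qed (fact signals_bounded ah_convergent)+
qed

end
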